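(* The uniform coherence of formation $C_f^{\mathcal U}$ has the following properties. (a) It is convex and a strong monotone under PIO: for every state $\rho$ and every PIO $\Lambda(X)=\sum_{\alpha,\beta}p_\alpha U_{\alpha,\beta}\Pi_{\beta|\alpha}X\Pi_{\beta|\alpha}U^\dagger_{\alpha,\beta}$, \[ C_f^{\mathcal U}(\Lambda(\rho))\le\sum_{\alpha,\beta}p_\alpha q_{\beta|\alpha}C_f^{\mathcal U}(\tilde\rho_{\beta|\alpha})\le C_f^{\mathcal U}(\rho), \] where $q_{\beta|\alpha}=\mathrm{Tr}[\rho\Pi_{\beta|\alpha}]$ and $\tilde\rho_{\beta|\alpha}=q_{\beta|\alpha}^{-1}U_{\alpha,\beta}\Pi_{\beta|\alpha}\rho\Pi_{\beta|\alpha}U_{\alpha,\beta}^\dagger$. (b) It is superadditive: $C_f^{\mathcal U}(\rho_{AB})\ge C_f^{\mathcal U}(\rho_A)+C_f^{\mathcal U}(\rho_B)$ for all bipartite states $\rho_{AB}$, with $\rho_A=\mathrm{Tr}_B\rho_{AB}$, $\rho_B=\mathrm{Tr}_A\rho_{AB}$. (c) It is fully additive on tensor products: $C_f^{\mathcal U}(\rho_A\otimes\sigma_B)=C_f^{\mathcal U}(\rho_A)+C_f^{\mathcal U}(\sigma_B)$ for all states $\rho_A,\sigma_B$. (d) It is lower semicontinuous.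
   Context: Fixed computational basis $\{|i\rangle\}_{i=1}^d$; for bipartite systems the computational basis is the product basis $\{|ij\rangle\}$. Logs base 2. $\mathcal U_k$ is the set of uniformly coherent states $|\Psi\rangle=k^{-1/2}\sum_{j\in J}e^{i\theta_j}|j\rangle$, $|J|=k$, $\theta_j\in\mathbb R$. The uniform coherence of formation is $C_f^{\mathcal U}(\rho)=\inf\{\sum_\alpha p_\alpha\log k_\alpha:\rho=\sum_\alpha p_\alpha|\Psi_\alpha\rangle\langle\Psi_\alpha|,\ |\Psi_\alpha\rangle\in\mathcal U_{k_\alpha}\}$ (finite decompositions), equal to $+\infty$ if no such decomposition exists. Incoherent unitaries are products of a permutation matrix and a diagonal unitary; incoherent projectors are $\Pi_I=\sum_{i\in I}|i\rangle\langle i|$. A PIO is a channel of the displayed form with $p$ a probability distribution, $U_{\alpha,\beta}$ incoherent unitaries and, for each $\alpha$, $\{\Pi_{\beta|\alpha}\}_\beta$ incoherent projectors summing to the identity (terms with $q_{\beta|\alpha}=0$ are omitted from the middle sum). *)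

theory Defs
  imports "HOL-Analysis.Analysis"
begin

text \<open>Operators on a finite-dimensional Hilbert space whose computational basis is
  indexed by the finite type 'n: matrices of type complex^'n^'n.\<close>

definition adj :: "complex^'n^'n \<Rightarrow> complex^'n^'n" where
  "adj A = (\<chi> i j. cnj (A $ j $ i))"

definition outer :: "complex^'n \<Rightarrow> complex^'n^'n" where
  "outer v = (\<chi> i j. v $ i * cnj (v $ j))"

definition is_state :: "complex^'n^'n \<Rightarrow> bool" where
  "is_state \<rho> \<longleftrightarrow> adj \<rho> = \<rho> \<and> trace \<rho> = 1 \<and>
     (\<forall>v::complex^'n. Im (\<Sum>i\<in>UNIV. \<Sum>j\<in>UNIV. cnj (v $ i) * \<rho> $ i $ j * v $ j) = 0
                  \<and> 0 \<le> Re (\<Sum>i\<in>UNIV. \<Sum>j\<in>UNIV. cnj (v $ i) * \<rho> $ i $ j * v $ j))"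

definition unif_coh :: "nat \<Rightarrow> complex^'n \<Rightarrow> bool" where
  "unif_coh k \<psi> \<longleftrightarrow> (\<exists>(J::'n set) (\<theta>::'n \<Rightarrow> real). J \<noteq> {} \<and> card J = k \<and>
      \<psi> = (\<chi> j. if j \<in> J then cis (\<theta> j) / complex_of_real (sqrt (real k)) else 0))"

text \<open>Uniform coherence of formation (value in [0, \<infinity>]; Inf of the empty set is \<infinity>).\<close>
definition uc_decomp :: "complex^'n^'n \<Rightarrow> nat \<Rightarrow> (nat \<Rightarrow> real) \<Rightarrow> (nat \<Rightarrow> complex^'n) \<Rightarrow> (nat \<Rightarrow> nat) \<Rightarrow> bool" where
  "uc_decomp \<rho> n p \<psi> k \<longleftrightarrow>
     (\<forall>a<n. 0 \<le> p a \<and> unif_coh (k a) (\<psi> a)) \<and> sum p {..<n} = 1 \<and>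
     \<rho> = (\<Sum>a<n. p a *\<^sub>R outer (\<psi> a))"

definition CfU :: "complex^'n^'n \<Rightarrow> ennreal" where
  "CfU \<rho> = Inf {ennreal (\<Sum>a<n. p a * log 2 (real (k a))) | n p \<psi> k. uc_decomp \<rho> n p \<psi> k}"

definition incoh_proj :: "'n set \<Rightarrow> complex^'n^'n" where
  "incoh_proj I = (\<chi> i j. if i = j \<and> i \<in> I then 1 else 0)"

definition incoh_unitary :: "complex^'n^'n \<Rightarrow> bool" where
  "incoh_unitary U \<longleftrightarrow> (\<exists>\<sigma> (\<phi>::'n \<Rightarrow> real). \<sigma> permutes UNIV \<and>
      U = (\<chi> i j. if i = \<sigma> j then cis (\<phi> j) else 0))"

definition tensor :: "complex^'a::finite^'a \<Rightarrow> complex^'b::finite^'b \<Rightarrow> complex^('a\<times>'b)^('a\<times>'b)" where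
  "tensor A B = (\<chi> x y. A $ fst x $ fst y * B $ snd x $ snd y)"

definition ptrace_B :: "complex^('a::finite\<times>'b::finite)^('a\<times>'b) \<Rightarrow> complex^'a^'a" where
  "ptrace_B R = (\<chi> i k. \<Sum>j\<in>(UNIV::'b set). R $ (i, j) $ (k, j))"

definition ptrace_A :: "complex^('a::finite\<times>'b::finite)^('a\<times>'b) \<Rightarrow> complex^'b^'b" where
  "ptrace_A R = (\<chi> j l. \<Sum>i\<in>(UNIV::'a set). R $ (i, j) $ (i, l))"

end

theory Submission
  imports Defs
begin

text \<open>
  A decomposition of \<rho> into uniformly coherent states can be written as
  \<rho> = \<Sum>x. p x |\<psi> x\<rangle>\<langle>\<psi> x| with \<psi> x = |J x|^(-1/2) \<Sum>j\<in>J x. z j |j\<rangle> for unimodular phases z,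
  at cost \<Sum>x. p x log |J x|. Every operation in the statement maps such a decomposition to one
  of the same kind: an incoherent projector cuts the support J down to J \<inter> P, an incoherent
  unitary moves it by a permutation, a partial trace splits it into its rows or columns, and the
  tensor product multiplies supports. The costs are then compared by two entropy inequalities for
  the uniform distribution on J: grouping by a partition (monotonicity under PIOs) and
  subadditivity over the two marginals (superadditivity, which together with the tensor
  construction gives additivity). For lower semicontinuity the terms of a decomposition are
  grouped by support: \<rho> = \<Sum>J. w J N J with N J in the convex hull of the uniform states
  supported on J, a compact set, and cost \<Sum>J. w J log |J|, which is continuous in the finitely
  many weights; near-optimal decompositions along a convergent sequence then have a convergent
  subsequence.
\<close>

definition unimodular :: "complex^'n \<Rightarrow> bool" where
  "unimodular z \<longleftrightarrow> (\<forall>j. cmod (z $ j) = 1)"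

definition unif_vec :: "'n set \<Rightarrow> complex^'n \<Rightarrow> complex^'n" where
  "unif_vec J z = (\<chi> j. if j \<in> J then z $ j / complex_of_real (sqrt (real (card J))) else 0)"

lemma unif_coh_iff_unif_vec:
  "unif_coh k \<psi> \<longleftrightarrow> (\<exists>J z. J \<noteq> {} \<and> card J = k \<and> unimodular z \<and> \<psi> = unif_vec J z)"
proof
  assume "unif_coh k \<psi>"
  then obtain J \<theta> where "J \<noteq> {}" "card J = k"
    "\<psi> = (\<chi> j. if j \<in> J then cis (\<theta> j) / complex_of_real (sqrt (real k)) else 0)"
    unfolding unif_coh_def by blast
  then show "\<exists>J z. J \<noteq> {} \<and> card J = k \<and> unimodular z \<and> \<psi> = unif_vec J z"
    by (intro exI[of _ J] exI[of _ "\<chi> j. cis (\<theta> j)"]) (auto simp: unif_vec_def unimodular_def)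
next
  assume "\<exists>J z. J \<noteq> {} \<and> card J = k \<and> unimodular z \<and> \<psi> = unif_vec J z"
  then obtain J z where J: "J \<noteq> {}" "card J = k" "unimodular z" "\<psi> = unif_vec J z" by blast
  have "cis (Arg (z $ j)) = z $ j" for j
    using rcis_cmod_Arg[of "z $ j"] J(3) by (simp add: rcis_def unimodular_def)
  with J show "unif_coh k \<psi>"
    unfolding unif_coh_def by (intro exI[of _ J] exI[of _ "\<lambda>j. Arg (z $ j)"]) (auto simp: unif_vec_def)
qed

lemma unif_coh_unif_vec: "J \<noteq> {} \<Longrightarrow> unimodular z \<Longrightarrow> unif_coh (card J) (unif_vec J z)"
  unfolding unif_coh_iff_unif_vec by blast

lemma divide_sqrt_rescale:
  assumes "m \<noteq> 0"
  shows "w / complex_of_real (sqrt (real k)) =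
    sqrt (real m / real k) *\<^sub>R (w / complex_of_real (sqrt (real m)))"
  using assms by (simp add: scaleR_conv_of_real real_sqrt_divide field_simps flip: of_real_mult)

lemma outer_scaleR: "outer (c *\<^sub>R v) = c\<^sup>2 *\<^sub>R outer v"
  by (simp add: vec_eq_iff outer_def power2_eq_square)

lemma log2_of_nat_nonneg: "0 \<le> log 2 (real n)"
  by (cases "n = 0") (auto simp: log_def)

lemma log2_of_nat_mono: "m \<le> n \<Longrightarrow> log 2 (real m) \<le> log 2 (real n)"
  using log2_of_nat_nonneg[of n] by (cases "m = 0") (auto simp: log_def[of 2 0])

section \<open>Decompositions into uniformly coherent states\<close>

text \<open>Terms of weight zero may have empty support; this allows ensembles whose branches
  vanish (after a projection, say) without pruning them first.\<close>

definition unif_decomp ::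
    "complex^'n^'n \<Rightarrow> 'i set \<Rightarrow> ('i \<Rightarrow> real) \<Rightarrow> ('i \<Rightarrow> 'n set) \<Rightarrow> ('i \<Rightarrow> complex^'n) \<Rightarrow> bool" where
  "unif_decomp \<rho> I p J z \<longleftrightarrow> finite I \<and> sum p I = 1 \<and>
     (\<forall>a\<in>I. 0 \<le> p a \<and> (p a \<noteq> 0 \<longrightarrow> J a \<noteq> {}) \<and> unimodular (z a)) \<and>
     \<rho> = (\<Sum>a\<in>I. p a *\<^sub>R outer (unif_vec (J a) (z a)))"

definition decomp_cost :: "'i set \<Rightarrow> ('i \<Rightarrow> real) \<Rightarrow> ('i \<Rightarrow> 'n set) \<Rightarrow> real" where
  "decomp_cost I p J = (\<Sum>a\<in>I. p a * log 2 (real (card (J a))))"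

lemma decomp_cost_nonneg: "unif_decomp \<rho> I p J z \<Longrightarrow> 0 \<le> decomp_cost I p J"
  unfolding unif_decomp_def decomp_cost_def by (auto intro!: sum_nonneg simp: log2_of_nat_nonneg)

lemma CfU_le_decomp_cost:
  assumes "unif_decomp \<rho> I p J z"
  shows "CfU \<rho> \<le> ennreal (decomp_cost I p J)"
proof -
  define I' where "I' = {a\<in>I. p a \<noteq> 0}"
  have I: "finite I" "sum p I = 1" "\<rho> = (\<Sum>a\<in>I. p a *\<^sub>R outer (unif_vec (J a) (z a)))"
    and I': "\<And>a. a \<in> I' \<Longrightarrow> 0 \<le> p a \<and> J a \<noteq> {} \<and> unimodular (z a)"
    using assms by (auto simp: unif_decomp_def I'_def)
  have drop: "sum f I = sum f I'" if "\<And>a. p a = 0 \<Longrightarrow> f a = 0" for f :: "_ \<Rightarrow> 'z::comm_monoid_add"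
    using that by (intro sum.mono_neutral_right) (auto simp: I'_def I)
  obtain h where h: "bij_betw h {..<card I'} I'"
    using ex_bij_betw_nat_finite[of I'] I(1) by (auto simp: I'_def lessThan_atLeast0)
  have reindex: "(\<Sum>a<card I'. f (h a)) = sum f I'" for f :: "_ \<Rightarrow> 'z::comm_monoid_add"
    by (rule sum.reindex_bij_betw[OF h])
  have "uc_decomp \<rho> (card I') (p \<circ> h) (\<lambda>a. unif_vec (J (h a)) (z (h a))) (\<lambda>a. card (J (h a)))"
    using I' bij_betwE[OF h] I drop[of p] drop[of "\<lambda>a. p a *\<^sub>R outer (unif_vec (J a) (z a))"]
      reindex[of p] reindex[of "\<lambda>a. p a *\<^sub>R outer (unif_vec (J a) (z a))"]
    unfolding uc_decomp_def by (auto simp: unif_coh_unif_vec)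
  then have "CfU \<rho> \<le> ennreal (\<Sum>a<card I'. (p \<circ> h) a * log 2 (real (card (J (h a)))))"
    unfolding CfU_def by (intro Inf_lower CollectI exI conjI) auto
  also have "\<dots> = ennreal (decomp_cost I p J)"
    using reindex[of "\<lambda>a. p a * log 2 (real (card (J a)))"] drop[of "\<lambda>a. p a * log 2 (real (card (J a)))"]
    by (simp add: decomp_cost_def)
  finally show ?thesis .
qed

lemma uc_decomp_imp_unif_decomp:
  assumes "uc_decomp \<rho> n p \<psi> k"
  obtains J z where "unif_decomp \<rho> {..<n} p J z" "\<And>a. a < n \<Longrightarrow> card (J a) = k a"
proof -
  have "\<forall>a\<in>{..<n}. \<exists>J z. J \<noteq> {} \<and> card J = k a \<and> unimodular z \<and> \<psi> a = unif_vec J z"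
    using assms by (auto simp: uc_decomp_def unif_coh_iff_unif_vec)
  then obtain J z where "\<forall>a\<in>{..<n}. J a \<noteq> {} \<and> card (J a) = k a \<and> unimodular (z a) \<and> \<psi> a = unif_vec (J a) (z a)"
    by metis
  with assms that show ?thesis by (auto simp: uc_decomp_def unif_decomp_def)
qed

lemma CfU_greatest:
  assumes "\<And>(I::nat set) p J z. unif_decomp \<rho> I p J z \<Longrightarrow> y \<le> ennreal (decomp_cost I p J)"
  shows "y \<le> CfU \<rho>"
  unfolding CfU_def
proof (rule Inf_greatest, clarify)
  fix n p \<psi> k
  assume "uc_decomp \<rho> n p \<psi> k"
  then obtain J z where "unif_decomp \<rho> {..<n} p J z" "\<And>a. a < n \<Longrightarrow> card (J a) = k a"
    using uc_decomp_imp_unif_decomp by blast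
  with assms show "y \<le> ennreal (\<Sum>a<n. p a * log 2 (real (k a)))"
    by (fastforce simp: decomp_cost_def)
qed

lemma CfU_less_decomp_cost:
  assumes "CfU \<rho> < x"
  obtains I :: "nat set" and p J z where "unif_decomp \<rho> I p J z" "ennreal (decomp_cost I p J) < x"
proof -
  obtain n p \<psi> k where d: "uc_decomp \<rho> n p \<psi> k" and lt: "ennreal (\<Sum>a<n. p a * log 2 (real (k a))) < x"
    using assms unfolding CfU_def Inf_less_iff by blast
  obtain J z where "unif_decomp \<rho> {..<n} p J z" "\<And>a. a < n \<Longrightarrow> card (J a) = k a"
    using uc_decomp_imp_unif_decomp[OF d] by blast
  with lt that show ?thesis by (simp add: decomp_cost_def)
qed

lemma CfU_approx:
  assumes "CfU \<rho> < top" "0 < e"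
  obtains I :: "nat set" and p J z
  where "unif_decomp \<rho> I p J z" "ennreal (decomp_cost I p J) < CfU \<rho> + ennreal e"
proof -
  have "CfU \<rho> < CfU \<rho> + ennreal e"
    using assms by (cases "CfU \<rho>") (auto simp: ennreal_less_iff simp flip: ennreal_plus)
  then show ?thesis using CfU_less_decomp_cost that by blast
qed

lemma unif_decomp_mixture:
  assumes S: "finite S" "\<forall>i\<in>S. 0 \<le> p i" "sum p S = 1"
    and d: "\<And>i. i \<in> S \<Longrightarrow> unif_decomp (\<rho>s i) (I i) (q i) (J i) (z i)"
  shows "unif_decomp (\<Sum>i\<in>S. p i *\<^sub>R \<rho>s i) (Sigma S I)
           (\<lambda>(i, a). p i * q i a) (\<lambda>(i, a). J i a) (\<lambda>(i, a). z i a)"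
    and "decomp_cost (Sigma S I) (\<lambda>(i, a). p i * q i a) (\<lambda>(i, a). J i a) =
           (\<Sum>i\<in>S. p i * decomp_cost (I i) (q i) (J i))"
proof -
  have fin: "\<And>i. i \<in> S \<Longrightarrow> finite (I i)" using d by (simp add: unif_decomp_def)
  have Sigma: "(\<Sum>x\<in>Sigma S I. f (fst x) (snd x)) = (\<Sum>i\<in>S. \<Sum>a\<in>I i. f i a)"
    for f :: "_ \<Rightarrow> _ \<Rightarrow> 'z::comm_monoid_add"
    using S(1) fin by (simp add: sum.Sigma split_beta')
  show "decomp_cost (Sigma S I) (\<lambda>(i, a). p i * q i a) (\<lambda>(i, a). J i a) =
           (\<Sum>i\<in>S. p i * decomp_cost (I i) (q i) (J i))"
    unfolding decomp_cost_def split_beta' Sigma[of "\<lambda>i a. p i * q i a * log 2 (real (card (J i a)))"]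
    by (simp add: sum_distrib_left mult.assoc)
  have "(\<Sum>i\<in>S. \<Sum>a\<in>I i. p i * q i a) = 1" "(\<Sum>i\<in>S. \<Sum>a\<in>I i. (p i * q i a) *\<^sub>R outer (unif_vec (J i a) (z i a))) =
      (\<Sum>i\<in>S. p i *\<^sub>R \<rho>s i)"
    using d S by (auto simp: unif_decomp_def scaleR_sum_right simp flip: sum_distrib_left intro!: sum.cong)
  with d S fin show "unif_decomp (\<Sum>i\<in>S. p i *\<^sub>R \<rho>s i) (Sigma S I)
           (\<lambda>(i, a). p i * q i a) (\<lambda>(i, a). J i a) (\<lambda>(i, a). z i a)"
    unfolding unif_decomp_def split_beta'
    by (auto simp: Sigma[of "\<lambda>i a. p i * q i a"] Sigma[of "\<lambda>i a. (p i * q i a) *\<^sub>R outer (unif_vec (J i a) (z i a))"]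
        unif_decomp_def)
qed

lemma CfU_convex:
  fixes \<rho>s :: "'i \<Rightarrow> complex^'n^'n"
  assumes S: "finite S" "\<forall>i\<in>S. 0 \<le> p i" "sum p S = 1"
  shows "CfU (\<Sum>i\<in>S. p i *\<^sub>R \<rho>s i) \<le> (\<Sum>i\<in>S. ennreal (p i) * CfU (\<rho>s i))"
proof -
  define S' where "S' = {i\<in>S. p i \<noteq> 0}"
  have drop: "sum f S = sum f S'" if "\<And>i. p i = 0 \<Longrightarrow> f i = 0" for f :: "_ \<Rightarrow> 'z::comm_monoid_add"
    using that S(1) by (intro sum.mono_neutral_right) (auto simp: S'_def)
  have S': "finite S'" "\<And>i. i \<in> S' \<Longrightarrow> 0 < p i" "sum p S' = 1"
    using S drop[of p] by (auto simp: S'_def less_le)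
  then have pnn: "\<And>i. i \<in> S' \<Longrightarrow> 0 \<le> p i" by (simp add: less_imp_le)
  have "CfU (\<Sum>i\<in>S'. p i *\<^sub>R \<rho>s i) \<le> (\<Sum>i\<in>S'. ennreal (p i) * CfU (\<rho>s i))"
  proof (rule ennreal_le_epsilon)
    fix e :: real
    assume fin: "(\<Sum>i\<in>S'. ennreal (p i) * CfU (\<rho>s i)) < top" and e: "0 < e"
    have "CfU (\<rho>s i) < top" if i: "i \<in> S'" for i
    proof -
      have "ennreal (p i) * CfU (\<rho>s i) < top"
        using fin i S'(1) by simp
      then show ?thesis using S'(2)[OF i] by (auto simp: ennreal_mult_less_top)
    qed
    then have "\<forall>i\<in>S'. \<exists>(I::nat set) q J z. unif_decomp (\<rho>s i) I q J z \<and>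
        ennreal (decomp_cost I q J) < CfU (\<rho>s i) + ennreal e"
      using CfU_approx[OF _ e] by metis
    then obtain I :: "'i \<Rightarrow> nat set" and q J z where d: "\<And>i. i \<in> S' \<Longrightarrow> unif_decomp (\<rho>s i) (I i) (q i) (J i) (z i)"
      and c: "\<And>i. i \<in> S' \<Longrightarrow> ennreal (decomp_cost (I i) (q i) (J i)) < CfU (\<rho>s i) + ennreal e"
      unfolding bchoice_iff by blast
    have "CfU (\<Sum>i\<in>S'. p i *\<^sub>R \<rho>s i) \<le> ennreal (\<Sum>i\<in>S'. p i * decomp_cost (I i) (q i) (J i))"
      using CfU_le_decomp_cost[OF unif_decomp_mixture(1)[OF S'(1) _ S'(3) d]]
        unif_decomp_mixture(2)[OF S'(1) _ S'(3) d] pnn by simp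
    also have "\<dots> = (\<Sum>i\<in>S'. ennreal (p i) * ennreal (decomp_cost (I i) (q i) (J i)))"
      using pnn decomp_cost_nonneg[OF d]
      by (simp add: ennreal_mult flip: sum_ennreal)
    also have "\<dots> \<le> (\<Sum>i\<in>S'. ennreal (p i) * (CfU (\<rho>s i) + ennreal e))"
      using c by (intro sum_mono mult_left_mono) (auto simp: less_imp_le)
    also have "\<dots> = (\<Sum>i\<in>S'. ennreal (p i) * CfU (\<rho>s i)) + (\<Sum>i\<in>S'. ennreal (p i)) * ennreal e"
      by (simp add: distrib_left sum.distrib sum_distrib_right)
    finally show "CfU (\<Sum>i\<in>S'. p i *\<^sub>R \<rho>s i) \<le> (\<Sum>i\<in>S'. ennreal (p i) * CfU (\<rho>s i)) + ennreal e"
      using pnn by (simp add: sum_ennreal S'(3))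
  qed
  then show ?thesis
    using drop[of "\<lambda>i. p i *\<^sub>R \<rho>s i"] drop[of "\<lambda>i. ennreal (p i) * CfU (\<rho>s i)"] by simp
qed

section \<open>Incoherent operations\<close>

lemma adj_matrix_mult: "adj ((A::complex^'n^'n) ** B) = adj B ** adj A"
  by (simp add: vec_eq_iff matrix_matrix_mult_def adj_def mult.commute)

lemma adj_incoh_proj: "adj (incoh_proj P) = incoh_proj P"
  by (auto simp: vec_eq_iff adj_def incoh_proj_def)

lemma outer_matrix_vector_mult: "outer ((W::complex^'n^'n) *v v) = W ** outer v ** adj W"
proof -
  have "(\<Sum>k\<in>UNIV. (\<Sum>j\<in>UNIV. W $ i $ j * (v $ j * cnj (v $ k))) * cnj (W $ l $ k)) =
        (\<Sum>j\<in>UNIV. W $ i $ j * v $ j) * (\<Sum>k\<in>UNIV. cnj (W $ l $ k) * cnj (v $ k))" for i l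
    by (simp add: sum_product sum_distrib_left sum_distrib_right mult_ac)
  then show ?thesis
    by (simp add: vec_eq_iff matrix_matrix_mult_def outer_def adj_def matrix_vector_mult_def cnj_sum)
qed

lemma matrix_mult_sum_scaleR:
  "(A::complex^'n^'n) ** (\<Sum>a\<in>I. c a *\<^sub>R M a) ** B = (\<Sum>a\<in>I. c a *\<^sub>R (A ** M a ** B))"
proof -
  have "(A ** (\<Sum>a\<in>I. c a *\<^sub>R M a) ** B) $ i $ l = (\<Sum>a\<in>I. c a *\<^sub>R (A ** M a ** B) $ i $ l)" for i l
    by (simp add: matrix_matrix_mult_def sum_component scaleR_sum_right sum_distrib_left
        sum_distrib_right mult_ac sum.swap[of _ I])
  then show ?thesis by (simp add: vec_eq_iff sum_component)
qed

lemma matrix_vector_mult_scaleR_complex: "(A::complex^'n^'m) *v (c *\<^sub>R v) = c *\<^sub>R (A *v v)"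
  by (simp add: vec_eq_iff matrix_vector_mult_def scaleR_sum_right)

lemma incoh_proj_mult_nth: "(incoh_proj P *v (v::complex^'n)) $ i = (if i \<in> P then v $ i else 0)"
  by (simp add: matrix_vector_mult_def incoh_proj_def if_distrib if_distribR sum.If_cases cong: if_cong)

lemma incoh_proj_matrix_mult_nth:
  "(incoh_proj P ** (M::complex^'n^'n)) $ a $ b = (if a \<in> P then M $ a $ b else 0)"
proof -
  have diag: "{k. a = k \<and> a \<in> P} = (if a \<in> P then {a} else {})" by auto
  show ?thesis
    by (simp add: matrix_matrix_mult_def incoh_proj_def if_distrib if_distribR sum.If_cases diag cong: if_cong)
qed

lemma matrix_mult_incoh_proj_nth:
  "((M::complex^'n^'n) ** incoh_proj P) $ a $ b = (if b \<in> P then M $ a $ b else 0)"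
proof -
  have diag: "{k. k = b \<and> k \<in> P} = (if b \<in> P then {b} else {})" by auto
  show ?thesis
    by (simp add: matrix_matrix_mult_def incoh_proj_def if_distrib if_distribR sum.If_cases diag cong: if_cong)
qed

lemma trace_mult_incoh_proj: "trace ((\<rho>::complex^'n^'n) ** incoh_proj P) = (\<Sum>i\<in>P. \<rho> $ i $ i)"
  by (simp add: trace_def matrix_mult_incoh_proj_nth sum.If_cases)

lemma incoh_proj_mult_unif_vec:
  "incoh_proj P *v unif_vec J z = sqrt (real (card (J \<inter> P)) / real (card J)) *\<^sub>R unif_vec (J \<inter> P) z"
  by (auto simp: vec_eq_iff incoh_proj_mult_nth unif_vec_def card_gt_0_iff intro!: divide_sqrt_rescale)

lemma incoh_unitary_mult_unif_vec:
  assumes "incoh_unitary U" "unimodular z"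
  obtains J' z' where "card J' = card J" "unimodular z'" "U *v unif_vec J z = unif_vec J' z'"
proof -
  obtain \<sigma> \<phi> where \<sigma>: "\<sigma> permutes UNIV" and U: "U = (\<chi> i j. if i = \<sigma> j then cis (\<phi> j) else 0)"
    using assms(1) unfolding incoh_unitary_def by blast
  have inv: "\<sigma> (inv \<sigma> i) = i" "inv \<sigma> (\<sigma> i) = i" for i
    using permutes_inverses[OF \<sigma>] by auto
  define z' where "z' = (\<chi> i. cis (\<phi> (inv \<sigma> i)) * z $ inv \<sigma> i)"
  have "(U *v v) $ i = cis (\<phi> (inv \<sigma> i)) * v $ inv \<sigma> i" for v i
  proof -
    have "{j. i = \<sigma> j} = {inv \<sigma> i}" by (auto simp: inv)
    then show ?thesis
      by (simp add: U matrix_vector_mult_def if_distrib if_distribR sum.If_cases cong: if_cong)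
  qed
  moreover have "inv \<sigma> i \<in> J \<longleftrightarrow> i \<in> \<sigma> ` J" for i
    by (metis image_iff inv)
  moreover have "card (\<sigma> ` J) = card J"
    using permutes_inj[OF \<sigma>] by (simp add: card_image inj_on_def)
  ultimately have "U *v unif_vec J z = unif_vec (\<sigma> ` J) z'"
    by (auto simp: vec_eq_iff unif_vec_def z'_def)
  moreover have "unimodular z'"
    using assms(2) by (simp add: unimodular_def z'_def norm_mult)
  ultimately show ?thesis
    using that \<open>card (\<sigma> ` J) = card J\<close> by blast
qed

lemma diag_outer_unif_vec:
  assumes "unimodular z"
  shows "outer (unif_vec J z) $ i $ i = of_real (if i \<in> J then 1 / real (card J) else 0)"
proof -
  have "z $ i * cnj (z $ i) = 1"
    using assms complex_norm_square[of "z $ i"] by (simp add: unimodular_def)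
  then show ?thesis
    by (simp add: outer_def unif_vec_def flip: of_real_mult)
qed

lemma trace_mult_incoh_proj_unif_decomp:
  assumes "unif_decomp \<rho> I p J z"
  shows "Re (trace (\<rho> ** incoh_proj P)) = (\<Sum>x\<in>I. p x * real (card (J x \<inter> P)) / real (card (J x)))"
proof -
  have \<rho>: "\<rho> = (\<Sum>x\<in>I. p x *\<^sub>R outer (unif_vec (J x) (z x)))" and z: "\<And>x. x \<in> I \<Longrightarrow> unimodular (z x)"
    using assms by (auto simp: unif_decomp_def)
  have "Re (trace (\<rho> ** incoh_proj P)) = (\<Sum>i\<in>P. \<Sum>x\<in>I. p x * (if i \<in> J x then 1 / real (card (J x)) else 0))"
    by (simp add: trace_mult_incoh_proj \<rho> Re_sum diag_outer_unif_vec z cong: sum.cong)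
  also have "\<dots> = (\<Sum>x\<in>I. p x * real (card (J x \<inter> P)) / real (card (J x)))"
    by (subst sum.swap) (simp add: sum_distrib_left[symmetric] sum.If_cases Int_commute)
  finally show ?thesis .
qed

lemma incoh_branch_unif_decomp:
  assumes d: "unif_decomp \<rho> I p J z" and U: "incoh_unitary U"
  obtains J' z' where "\<And>x. x \<in> I \<Longrightarrow> card (J' x) = card (J x \<inter> P) \<and> unimodular (z' x)"
    "U ** incoh_proj P ** \<rho> ** incoh_proj P ** adj U =
       (\<Sum>x\<in>I. (p x * real (card (J x \<inter> P)) / real (card (J x))) *\<^sub>R outer (unif_vec (J' x) (z' x)))"
proof -
  have \<rho>: "\<rho> = (\<Sum>x\<in>I. p x *\<^sub>R outer (unif_vec (J x) (z x)))" and z: "\<And>x. x \<in> I \<Longrightarrow> unimodular (z x)"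
    using d by (auto simp: unif_decomp_def)
  define W where "W = U ** incoh_proj P"
  define s where "s x = sqrt (real (card (J x \<inter> P)) / real (card (J x)))" for x
  have "\<forall>x\<in>I. \<exists>J' z'. card J' = card (J x \<inter> P) \<and> unimodular z' \<and>
      W *v unif_vec (J x) (z x) = s x *\<^sub>R unif_vec J' z'"
  proof
    fix x assume "x \<in> I"
    then obtain J' z' where "card J' = card (J x \<inter> P)" "unimodular z'"
      "U *v unif_vec (J x \<inter> P) (z x) = unif_vec J' z'"
      using incoh_unitary_mult_unif_vec[OF U z] by metis
    then show "\<exists>J' z'. card J' = card (J x \<inter> P) \<and> unimodular z' \<and> W *v unif_vec (J x) (z x) = s x *\<^sub>R unif_vec J' z'"
      by (auto simp: W_def s_def incoh_proj_mult_unif_vec matrix_vector_mult_scaleR_complex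
          simp flip: matrix_vector_mul_assoc)
  qed
  then obtain J' z' where J': "\<And>x. x \<in> I \<Longrightarrow> card (J' x) = card (J x \<inter> P) \<and> unimodular (z' x) \<and>
      W *v unif_vec (J x) (z x) = s x *\<^sub>R unif_vec (J' x) (z' x)"
    unfolding bchoice_iff by blast
  have "U ** incoh_proj P ** \<rho> ** incoh_proj P ** adj U = W ** \<rho> ** adj W"
    by (simp add: W_def adj_matrix_mult adj_incoh_proj matrix_mul_assoc)
  also have "\<dots> = (\<Sum>x\<in>I. (p x * real (card (J x \<inter> P)) / real (card (J x))) *\<^sub>R outer (unif_vec (J' x) (z' x)))"
    unfolding \<rho> matrix_mult_sum_scaleR
    by (intro sum.cong refl) (simp add: J' flip: outer_matrix_vector_mult add: outer_scaleR s_def)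
  finally show ?thesis
    using that J' by blast
qed

section \<open>Strong monotonicity under PIOs\<close>

lemma sum_partition:
  assumes "finite B" "\<forall>i. \<exists>!b. b \<in> B \<and> i \<in> P b" "finite S"
  shows "(\<Sum>b\<in>B. sum f (S \<inter> P b)) = sum f S"
proof -
  have "sum f (\<Union>b\<in>B. S \<inter> P b) = (\<Sum>b\<in>B. sum f (S \<inter> P b))"
    using assms by (intro sum.UNION_disjoint) auto
  moreover have "(\<Union>b\<in>B. S \<inter> P b) = S"
    using assms(2) by blast
  ultimately show ?thesis by simp
qed

text \<open>Grouping the uniform distribution on J by a partition can only lower its entropy.\<close>

lemma card_log_partition_le:
  assumes "finite B" "\<forall>i. \<exists>!b. b \<in> B \<and> i \<in> P b" "finite J"
  shows "(\<Sum>b\<in>B. real (card (J \<inter> P b)) * log 2 (real (card (J \<inter> P b)))) \<le> real (card J) * log 2 (real (card J))"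
proof -
  have "(\<Sum>b\<in>B. real (card (J \<inter> P b)) * log 2 (real (card (J \<inter> P b)))) \<le>
        (\<Sum>b\<in>B. real (card (J \<inter> P b)) * log 2 (real (card J)))"
  proof (intro sum_mono mult_left_mono)
    fix b
    show "log 2 (real (card (J \<inter> P b))) \<le> log 2 (real (card J))"
      using assms(3) by (intro log2_of_nat_mono card_mono) auto
  qed simp
  also have "\<dots> = real (card J) * log 2 (real (card J))"
    using sum_partition[OF assms, of "\<lambda>_. 1::real"] by (simp flip: sum_distrib_right)
  finally show ?thesis .
qed

lemma CfU_incoh_branch_le:
  assumes d: "unif_decomp \<rho> I p J z" and U: "incoh_unitary U"
    and q: "q = Re (trace (\<rho> ** incoh_proj P))" "q \<noteq> 0"
  shows "ennreal q * CfU ((1 / q) *\<^sub>R (U ** incoh_proj P ** \<rho> ** incoh_proj P ** adj U)) \<le>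
    ennreal (\<Sum>x\<in>I. p x / real (card (J x)) * (real (card (J x \<inter> P)) * log 2 (real (card (J x \<inter> P)))))"
proof -
  have fin: "finite I" and p: "\<And>x. x \<in> I \<Longrightarrow> 0 \<le> p x"
    using d by (auto simp: unif_decomp_def)
  define w where "w x = p x * real (card (J x \<inter> P)) / real (card (J x))" for x
  define F where "F = (\<Sum>x\<in>I. p x / real (card (J x)) * (real (card (J x \<inter> P)) * log 2 (real (card (J x \<inter> P)))))"
  obtain J' z' where J': "\<And>x. x \<in> I \<Longrightarrow> card (J' x) = card (J x \<inter> P) \<and> unimodular (z' x)"
    and K: "U ** incoh_proj P ** \<rho> ** incoh_proj P ** adj U = (\<Sum>x\<in>I. w x *\<^sub>R outer (unif_vec (J' x) (z' x)))"
    using incoh_branch_unif_decomp[OF d U, of P] unfolding w_def by blast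
  have qw: "q = sum w I"
    using trace_mult_incoh_proj_unif_decomp[OF d] q(1) by (simp add: w_def)
  have w: "0 \<le> w x" if "x \<in> I" for x
    using p[OF that] by (simp add: w_def)
  then have "0 < q" using q(2) qw by (simp add: sum_nonneg less_le)
  have "(\<Sum>x\<in>I. w x / q) = 1"
    using qw \<open>0 < q\<close> by (simp flip: sum_divide_distrib)
  moreover have "J' x \<noteq> {}" if "x \<in> I" "w x / q \<noteq> 0" for x
  proof -
    have "card (J x \<inter> P) \<noteq> 0" using that(2) by (auto simp: w_def)
    then show ?thesis using J'[OF that(1)] by auto
  qed
  moreover have "(1 / q) *\<^sub>R (U ** incoh_proj P ** \<rho> ** incoh_proj P ** adj U) =
      (\<Sum>x\<in>I. (w x / q) *\<^sub>R outer (unif_vec (J' x) (z' x)))"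
    unfolding K scaleR_sum_right by (simp add: divide_inverse_commute)
  ultimately have "unif_decomp ((1 / q) *\<^sub>R (U ** incoh_proj P ** \<rho> ** incoh_proj P ** adj U)) I (\<lambda>x. w x / q) J' z'"
    using fin w J' \<open>0 < q\<close> unfolding unif_decomp_def by simp
  moreover have "decomp_cost I (\<lambda>x. w x / q) J' = F / q"
    unfolding decomp_cost_def F_def sum_divide_distrib
    by (intro sum.cong refl) (simp add: J'[THEN conjunct1] w_def)
  ultimately have "CfU ((1 / q) *\<^sub>R (U ** incoh_proj P ** \<rho> ** incoh_proj P ** adj U)) \<le> ennreal (F / q)"
    using CfU_le_decomp_cost by metis
  then have "ennreal q * CfU ((1 / q) *\<^sub>R (U ** incoh_proj P ** \<rho> ** incoh_proj P ** adj U)) \<le> ennreal q * ennreal (F / q)"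
    by (rule mult_left_mono) simp
  also have "\<dots> = ennreal F"
    using \<open>0 < q\<close> by (simp flip: ennreal_mult')
  finally show ?thesis by (simp add: F_def)
qed

lemma sum_UNIV_supported:
  fixes f :: "'a::finite \<Rightarrow> 'b::comm_monoid_add"
  assumes "\<And>a. a \<notin> S \<Longrightarrow> f a = 0"
  shows "sum f UNIV = sum f S"
  using assms by (intro sum.mono_neutral_right) auto

lemma quadratic_form_supported:
  fixes v :: "complex^'n"
  assumes "\<And>a. a \<notin> S \<Longrightarrow> v $ a = 0"
  shows "(\<Sum>a\<in>UNIV. \<Sum>b\<in>UNIV. cnj (v $ a) * M $ a $ b * v $ b) =
         (\<Sum>a\<in>S. \<Sum>b\<in>S. cnj (v $ a) * M $ a $ b * v $ b)"
proof -
  have "(\<Sum>a\<in>UNIV. \<Sum>b\<in>UNIV. cnj (v $ a) * M $ a $ b * v $ b) =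
        (\<Sum>a\<in>S. \<Sum>b\<in>UNIV. cnj (v $ a) * M $ a $ b * v $ b)"
    by (rule sum_UNIV_supported) (simp add: assms)
  also have "\<dots> = (\<Sum>a\<in>S. \<Sum>b\<in>S. cnj (v $ a) * M $ a $ b * v $ b)"
    by (intro sum.cong refl sum_UNIV_supported) (simp add: assms)
  finally show ?thesis .
qed

lemma is_state_quadratic_form:
  assumes "is_state \<rho>"
  shows "Im (\<Sum>a\<in>UNIV. \<Sum>b\<in>UNIV. cnj (v $ a) * \<rho> $ a $ b * v $ b) = 0"
    and "0 \<le> Re (\<Sum>a\<in>UNIV. \<Sum>b\<in>UNIV. cnj (v $ a) * \<rho> $ a $ b * v $ b)"
  using assms unfolding is_state_def by blast+

lemma is_state_diag:
  assumes "is_state (\<rho>::complex^'n^'n)"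
  shows "Im (\<rho> $ i $ i) = 0" "0 \<le> Re (\<rho> $ i $ i)"
proof -
  define v :: "complex^'n" where "v = (\<chi> a. if a = i then 1 else 0)"
  have "(\<Sum>a\<in>UNIV. \<Sum>b\<in>UNIV. cnj (v $ a) * \<rho> $ a $ b * v $ b) = \<rho> $ i $ i"
    by (subst quadratic_form_supported[where S="{i}"]) (simp_all add: v_def)
  then show "Im (\<rho> $ i $ i) = 0" "0 \<le> Re (\<rho> $ i $ i)"
    using is_state_quadratic_form[OF assms, of v] by simp_all
qed

lemma is_state_zero_diag:
  assumes S: "is_state (\<rho>::complex^'n^'n)" and ii: "\<rho> $ i $ i = 0"
  shows "\<rho> $ i $ j = 0"
proof (rule ccontr)
  define c where "c = \<rho> $ i $ j"
  assume "\<rho> $ i $ j \<noteq> 0"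
  then have ij: "i \<noteq> j" and c: "0 < (cmod c)\<^sup>2" using ii by (auto simp: c_def)
  have "adj \<rho> $ i $ j = \<rho> $ i $ j"
    using S by (simp add: is_state_def)
  then have "cnj (\<rho> $ j $ i) = c"
    by (simp add: adj_def c_def)
  then have ji: "\<rho> $ j $ i = cnj c"
    by (metis complex_cnj_cnj)
  text \<open>Positivity on the vector \<open>- s c |i> + |j>\<close> with s large forces c = 0.\<close>
  define s :: real where "s = (Re (\<rho> $ j $ j) + 1) / (2 * (cmod c)\<^sup>2)"
  define v :: "complex^'n" where "v = (\<chi> a. if a = i then - of_real s * c else if a = j then 1 else 0)"
  have "(\<Sum>a\<in>UNIV. \<Sum>b\<in>UNIV. cnj (v $ a) * \<rho> $ a $ b * v $ b) =
      - 2 * of_real s * (c * cnj c) + \<rho> $ j $ j"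
    using ij by (subst quadratic_form_supported[where S="{i, j}"]) (simp_all add: v_def ii ji c_def[symmetric] algebra_simps)
  also have "\<dots> = of_real (- 1 - Re (\<rho> $ j $ j)) + \<rho> $ j $ j"
    using c by (simp add: s_def field_simps flip: complex_norm_square)
  finally have "Re (\<Sum>a\<in>UNIV. \<Sum>b\<in>UNIV. cnj (v $ a) * \<rho> $ a $ b * v $ b) = -1"
    by simp
  with is_state_quadratic_form(2)[OF S, of v] show False
    by simp
qed

lemma is_state_trace_incoh_proj_nonneg:
  "is_state \<rho> \<Longrightarrow> 0 \<le> Re (trace (\<rho> ** incoh_proj P))"
  by (simp add: trace_mult_incoh_proj Re_sum is_state_diag sum_nonneg)

lemma is_state_trace_incoh_proj_eq_0:
  assumes S: "is_state \<rho>" and q: "Re (trace (\<rho> ** incoh_proj P)) = 0"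
  shows "incoh_proj P ** \<rho> ** incoh_proj P = 0"
proof -
  have "\<rho> $ i $ i = 0" if "i \<in> P" for i
  proof -
    have "Re (\<rho> $ i $ i) = 0"
      using q that is_state_diag(2)[OF S] by (simp add: trace_mult_incoh_proj Re_sum sum_nonneg_eq_0_iff)
    then show ?thesis using is_state_diag(1)[OF S] by (simp add: complex_eq_iff)
  qed
  then show ?thesis
    by (simp add: vec_eq_iff incoh_proj_matrix_mult_nth matrix_mult_incoh_proj_nth is_state_zero_diag[OF S])
qed

lemma is_state_sum_trace_incoh_proj:
  assumes "is_state \<rho>" "finite B" "\<forall>i. \<exists>!b. b \<in> B \<and> i \<in> P b"
  shows "(\<Sum>b\<in>B. Re (trace (\<rho> ** incoh_proj (P b)))) = 1"
proof -
  have "(\<Sum>b\<in>B. Re (trace (\<rho> ** incoh_proj (P b)))) = (\<Sum>b\<in>B. \<Sum>i\<in>UNIV \<inter> P b. Re (\<rho> $ i $ i))"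
    by (simp add: trace_mult_incoh_proj)
  also have "\<dots> = Re (trace \<rho>)"
    unfolding sum_partition[OF assms(2,3) finite] by (simp add: trace_def)
  finally show ?thesis using assms(1) by (simp add: is_state_def)
qed

lemma CfU_le_normalized_mixture:
  assumes A: "finite A" "\<forall>a\<in>A. 0 \<le> p a" "sum p A = 1"
    and B: "\<forall>a\<in>A. finite (B a) \<and> sum (q a) (B a) = 1 \<and> (\<forall>b\<in>B a. 0 \<le> q a b \<and> (q a b = 0 \<longrightarrow> K a b = 0))"
  shows "CfU (\<Sum>a\<in>A. \<Sum>b\<in>B a. p a *\<^sub>R K a b) \<le>
    (\<Sum>a\<in>A. \<Sum>b\<in>{b\<in>B a. q a b \<noteq> 0}. ennreal (p a * q a b) * CfU ((1 / q a b) *\<^sub>R K a b))"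
proof -
  define B' where "B' a = {b\<in>B a. q a b \<noteq> 0}" for a
  have finB': "\<forall>a\<in>A. finite (B' a)" using B by (simp add: B'_def)
  have fin: "finite (Sigma A B')" using A(1) finB' by simp
  have Sigma: "(\<Sum>(a, b)\<in>Sigma A B'. f a b) = (\<Sum>a\<in>A. \<Sum>b\<in>B' a. f a b)" for f :: "_ \<Rightarrow> _ \<Rightarrow> 'z::comm_monoid_add"
    using A(1) finB' by (simp add: sum.Sigma)
  have drop: "(\<Sum>b\<in>B a. f b) = (\<Sum>b\<in>B' a. f b)" if "a \<in> A" "\<And>b. b \<in> B a \<Longrightarrow> q a b = 0 \<Longrightarrow> f b = 0"
    for a and f :: "_ \<Rightarrow> 'z::comm_monoid_add"
    using that B by (intro sum.mono_neutral_right) (auto simp: B'_def)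
  have "(\<Sum>a\<in>A. \<Sum>b\<in>B a. p a *\<^sub>R K a b) = (\<Sum>(a, b)\<in>Sigma A B'. (p a * q a b) *\<^sub>R ((1 / q a b) *\<^sub>R K a b))"
    unfolding Sigma
  proof (rule sum.cong[OF refl])
    fix a assume a: "a \<in> A"
    have "(\<Sum>b\<in>B a. p a *\<^sub>R K a b) = (\<Sum>b\<in>B' a. p a *\<^sub>R K a b)"
      using a B by (intro drop) auto
    then show "(\<Sum>b\<in>B a. p a *\<^sub>R K a b) = (\<Sum>b\<in>B' a. (p a * q a b) *\<^sub>R ((1 / q a b) *\<^sub>R K a b))"
      by (simp add: B'_def)
  qed
  moreover have "(\<Sum>(a, b)\<in>Sigma A B'. p a * q a b) = 1"
  proof -
    have "(\<Sum>b\<in>B' a. q a b) = 1" if "a \<in> A" for a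
      using drop[OF that, of "q a"] B that by auto
    then show ?thesis
      using A(3) by (simp add: Sigma flip: sum_distrib_left)
  qed
  ultimately have "CfU (\<Sum>a\<in>A. \<Sum>b\<in>B a. p a *\<^sub>R K a b) \<le>
      (\<Sum>(a, b)\<in>Sigma A B'. ennreal (p a * q a b) * CfU ((1 / q a b) *\<^sub>R K a b))"
    using CfU_convex[OF fin, of "\<lambda>(a, b). p a * q a b" "\<lambda>(a, b). (1 / q a b) *\<^sub>R K a b"] A B
    by (force simp: split_beta' B'_def)
  then show ?thesis by (simp add: Sigma B'_def)
qed

lemma sum_branch_costs_le:
  fixes J :: "'i \<Rightarrow> 'n::finite set"
  assumes "finite B" "\<forall>i. \<exists>!b. b \<in> B \<and> i \<in> P b" "\<forall>x\<in>X. 0 \<le> w x"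
  shows "(\<Sum>b\<in>B. \<Sum>x\<in>X. w x / real (card (J x)) *
           (real (card (J x \<inter> P b)) * log 2 (real (card (J x \<inter> P b))))) \<le>
         (\<Sum>x\<in>X. w x * log 2 (real (card (J x))))"
proof -
  have "(\<Sum>b\<in>B. \<Sum>x\<in>X. w x / real (card (J x)) *
           (real (card (J x \<inter> P b)) * log 2 (real (card (J x \<inter> P b))))) =
        (\<Sum>x\<in>X. w x / real (card (J x)) *
           (\<Sum>b\<in>B. real (card (J x \<inter> P b)) * log 2 (real (card (J x \<inter> P b)))))"
    by (simp add: sum.swap[of _ B] sum_distrib_left)
  also have "\<dots> \<le> (\<Sum>x\<in>X. w x / real (card (J x)) * (real (card (J x)) * log 2 (real (card (J x)))))"
    using assms by (intro sum_mono mult_left_mono card_log_partition_le) auto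
  also have "\<dots> = (\<Sum>x\<in>X. w x * log 2 (real (card (J x))))"
    by (intro sum.cong refl) (simp add: log_def)
  finally show ?thesis .
qed

lemma CfU_incoh_branches_le:
  fixes \<rho> :: "complex^'n^'n"
  assumes A: "finite A" "\<forall>a\<in>A. 0 \<le> p a" "sum p A = 1"
    and B: "\<forall>a\<in>A. finite (B a) \<and> (\<forall>i. \<exists>!b. b \<in> B a \<and> i \<in> I a b)"
    and U: "\<forall>a\<in>A. \<forall>b\<in>B a. incoh_unitary (U a b)"
  defines "q \<equiv> \<lambda>a b. Re (trace (\<rho> ** incoh_proj (I a b)))"
    and "K \<equiv> \<lambda>a b. U a b ** incoh_proj (I a b) ** \<rho> ** incoh_proj (I a b) ** adj (U a b)"
  shows "(\<Sum>a\<in>A. \<Sum>b\<in>{b\<in>B a. q a b \<noteq> 0}. ennreal (p a * q a b) * CfU ((1 / q a b) *\<^sub>R K a b)) \<le> CfU \<rho>"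
proof (rule CfU_greatest)
  fix X :: "nat set" and w J z
  assume d: "unif_decomp \<rho> X w J z"
  have X: "finite X" "\<And>x. x \<in> X \<Longrightarrow> 0 \<le> w x"
    using d by (auto simp: unif_decomp_def)
  define f where
    "f a b = (\<Sum>x\<in>X. w x / real (card (J x)) * (real (card (J x \<inter> I a b)) * log 2 (real (card (J x \<inter> I a b)))))"
    for a b
  have f: "0 \<le> f a b" for a b
    unfolding f_def using X by (intro sum_nonneg mult_nonneg_nonneg) (auto simp: log2_of_nat_nonneg)
  have q: "0 \<le> q a b" for a b
    unfolding q_def trace_mult_incoh_proj_unif_decomp[OF d] using X by (auto intro!: sum_nonneg)
  have cost: "(\<Sum>b\<in>B a. f a b) \<le> decomp_cost X w J" if "a \<in> A" for a
    unfolding f_def decomp_cost_def using B X that by (intro sum_branch_costs_le) auto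
  have "(\<Sum>a\<in>A. \<Sum>b\<in>{b\<in>B a. q a b \<noteq> 0}. p a * f a b) \<le> (\<Sum>a\<in>A. \<Sum>b\<in>B a. p a * f a b)"
    using A(2) B f by (intro sum_mono sum_mono2) auto
  also have "\<dots> \<le> (\<Sum>a\<in>A. p a * decomp_cost X w J)"
    using A(2) cost by (intro sum_mono) (simp add: mult_left_mono flip: sum_distrib_left)
  also have "\<dots> = decomp_cost X w J"
    using A(3) by (simp flip: sum_distrib_right)
  finally have fB: "(\<Sum>a\<in>A. \<Sum>b\<in>{b\<in>B a. q a b \<noteq> 0}. p a * f a b) \<le> decomp_cost X w J" .
  have "(\<Sum>a\<in>A. \<Sum>b\<in>{b\<in>B a. q a b \<noteq> 0}. ennreal (p a * q a b) * CfU ((1 / q a b) *\<^sub>R K a b)) \<le>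
        (\<Sum>a\<in>A. \<Sum>b\<in>{b\<in>B a. q a b \<noteq> 0}. ennreal (p a * f a b))"
  proof (intro sum_mono)
    fix a b assume a: "a \<in> A" and b: "b \<in> {b\<in>B a. q a b \<noteq> 0}"
    have "ennreal (q a b) * CfU ((1 / q a b) *\<^sub>R K a b) \<le> ennreal (f a b)"
      unfolding f_def K_def using CfU_incoh_branch_le[OF d] U a b by (simp add: q_def)
    then have "ennreal (p a) * (ennreal (q a b) * CfU ((1 / q a b) *\<^sub>R K a b)) \<le> ennreal (p a) * ennreal (f a b)"
      by (rule mult_left_mono) simp
    then show "ennreal (p a * q a b) * CfU ((1 / q a b) *\<^sub>R K a b) \<le> ennreal (p a * f a b)"
      using A(2) a q f by (simp add: ennreal_mult mult.assoc)
  qed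
  also have "\<dots> = ennreal (\<Sum>a\<in>A. \<Sum>b\<in>{b\<in>B a. q a b \<noteq> 0}. p a * f a b)"
    using A(2) f by (simp add: sum_nonneg flip: sum_ennreal)
  also have "\<dots> \<le> ennreal (decomp_cost X w J)"
    using fB by (rule ennreal_leI)
  finally show "(\<Sum>a\<in>A. \<Sum>b\<in>{b\<in>B a. q a b \<noteq> 0}. ennreal (p a * q a b) * CfU ((1 / q a b) *\<^sub>R K a b))
      \<le> ennreal (decomp_cost X w J)" .
qed

lemma CfU_PIO_strong_monotone:
  fixes \<rho> :: "complex^'n^'n"
  assumes S: "is_state \<rho>" and A: "finite A" "\<forall>a\<in>A. 0 \<le> p a" "sum p A = 1"
    and B: "\<forall>a\<in>A. finite (B a) \<and> (\<forall>i. \<exists>!b. b \<in> B a \<and> i \<in> I a b)"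
    and U: "\<forall>a\<in>A. \<forall>b\<in>B a. incoh_unitary (U a b)"
  shows "let q = (\<lambda>a b. Re (trace (\<rho> ** incoh_proj (I a b))));
           K = (\<lambda>a b. U a b ** incoh_proj (I a b) ** \<rho> ** incoh_proj (I a b) ** adj (U a b));
           mid = (\<Sum>a\<in>A. \<Sum>b\<in>{b\<in>B a. q a b \<noteq> 0}.
                    ennreal (p a * q a b) * CfU ((1 / q a b) *\<^sub>R K a b))
       in CfU (\<Sum>a\<in>A. \<Sum>b\<in>B a. p a *\<^sub>R K a b) \<le> mid \<and> mid \<le> CfU \<rho>"
  unfolding Let_def
proof (intro conjI CfU_le_normalized_mixture[OF A] ballI CfU_incoh_branches_le[OF A B U] impI)
  fix a assume a: "a \<in> A"
  show "finite (B a)"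
    using B a by blast
  show "(\<Sum>b\<in>B a. Re (trace (\<rho> ** incoh_proj (I a b)))) = 1"
    using B a by (intro is_state_sum_trace_incoh_proj[OF S]) auto
  fix b
  show "0 \<le> Re (trace (\<rho> ** incoh_proj (I a b)))"
    by (rule is_state_trace_incoh_proj_nonneg[OF S])
  assume "Re (trace (\<rho> ** incoh_proj (I a b))) = 0"
  then show "U a b ** incoh_proj (I a b) ** \<rho> ** incoh_proj (I a b) ** adj (U a b) = 0"
    using is_state_trace_incoh_proj_eq_0[OF S] by (simp flip: matrix_mul_assoc)
qed

section \<open>Partial traces and superadditivity\<close>

definition compress :: "('m \<Rightarrow> 'n) \<Rightarrow> complex^'n^'n \<Rightarrow> complex^'m^'m" where
  "compress f M = (\<chi> i k. M $ f i $ f k)"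

lemma ptrace_B_eq_sum_compress: "ptrace_B R = (\<Sum>j\<in>UNIV. compress (\<lambda>i. (i, j)) R)"
  by (simp add: vec_eq_iff ptrace_B_def compress_def)

lemma ptrace_A_eq_sum_compress: "ptrace_A R = (\<Sum>i\<in>UNIV. compress (Pair i) R)"
  by (simp add: vec_eq_iff ptrace_A_def compress_def)

lemma compress_outer: "compress f (outer v) = outer (\<chi> i. v $ f i)"
  by (simp add: vec_eq_iff compress_def outer_def)

lemma compress_sum_scaleR: "compress f (\<Sum>a\<in>I. c a *\<^sub>R M a) = (\<Sum>a\<in>I. c a *\<^sub>R compress f (M a))"
  by (simp add: vec_eq_iff compress_def)

lemma unif_vec_reindex:
  "(\<chi> i. unif_vec J z $ f i) =
     sqrt (real (card (f -` J)) / real (card J)) *\<^sub>R unif_vec (f -` J) (\<chi> i. z $ f i)"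
  by (auto simp: vec_eq_iff unif_vec_def card_gt_0_iff vimage_def intro!: divide_sqrt_rescale)

lemma card_vimage_inj: "inj f \<Longrightarrow> card (f -` S) = card (S \<inter> range f)"
  by (metis card_image image_vimage_eq inj_on_subset subset_UNIV)

lemma CfU_sum_compress_le:
  fixes f :: "'b::finite \<Rightarrow> 'm::finite \<Rightarrow> 'n::finite"
  assumes d: "unif_decomp R I p S z" and inj: "\<And>b. inj (f b)"
    and part: "\<forall>k. \<exists>!b. b \<in> UNIV \<and> k \<in> range (f b)"
  shows "CfU (\<Sum>b\<in>UNIV. compress (f b) R) \<le>
    ennreal (\<Sum>x\<in>I. p x / real (card (S x)) *
      (\<Sum>b\<in>UNIV. real (card (f b -` S x)) * log 2 (real (card (f b -` S x)))))"
proof -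
  have fin: "finite I" and p1: "sum p I = 1" and R: "R = (\<Sum>x\<in>I. p x *\<^sub>R outer (unif_vec (S x) (z x)))"
    and px: "\<And>x. x \<in> I \<Longrightarrow> 0 \<le> p x \<and> (p x \<noteq> 0 \<longrightarrow> S x \<noteq> {}) \<and> unimodular (z x)"
    using d by (auto simp: unif_decomp_def)
  have card_sum: "(\<Sum>b\<in>UNIV. real (card (f b -` S x))) = real (card (S x))" for x
    using sum_partition[OF finite part finite, of "\<lambda>_. 1::real"] by (simp add: card_vimage_inj[OF inj])
  define w where "w = (\<lambda>(x, b). p x * real (card (f b -` S x)) / real (card (S x)))"
  define J' where "J' = (\<lambda>(x, b). f b -` S x)"
  define z' where "z' = (\<lambda>(x, b). \<chi> i. z x $ f b i)"
  have "unif_decomp (\<Sum>b\<in>UNIV. compress (f b) R) (I \<times> UNIV) w J' z'"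
    unfolding unif_decomp_def
  proof (intro conjI ballI)
    show "sum w (I \<times> UNIV) = 1"
    proof -
      have "sum w (I \<times> UNIV) = (\<Sum>x\<in>I. p x / real (card (S x)) * (\<Sum>b\<in>UNIV. real (card (f b -` S x))))"
        by (simp add: w_def sum.cartesian_product' sum_distrib_left)
      also have "\<dots> = sum p I"
        using px by (intro sum.cong refl) (auto simp: card_sum card_eq_0_iff)
      finally show ?thesis using p1 by simp
    qed
    show "(\<Sum>b\<in>UNIV. compress (f b) R) = (\<Sum>t\<in>I \<times> UNIV. w t *\<^sub>R outer (unif_vec (J' t) (z' t)))"
      by (simp add: R compress_sum_scaleR compress_outer unif_vec_reindex outer_scaleR w_def J'_def z'_def
          sum.cartesian_product' sum.swap[of _ UNIV I])
  qed (use fin px in \<open>auto simp: w_def J'_def z'_def unimodular_def\<close>)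
  then have "CfU (\<Sum>b\<in>UNIV. compress (f b) R) \<le> ennreal (decomp_cost (I \<times> UNIV) w J')"
    by (rule CfU_le_decomp_cost)
  also have "decomp_cost (I \<times> UNIV) w J' = (\<Sum>x\<in>I. p x / real (card (S x)) *
      (\<Sum>b\<in>UNIV. real (card (f b -` S x)) * log 2 (real (card (f b -` S x)))))"
    by (simp add: decomp_cost_def w_def J'_def sum.cartesian_product' sum_distrib_left mult_ac)
  finally show ?thesis .
qed

lemma sum_group_card:
  fixes g :: "'x \<Rightarrow> 'y::finite" and h :: "'y \<Rightarrow> real"
  assumes "finite S"
  shows "(\<Sum>x\<in>S. h (g x)) = (\<Sum>y\<in>UNIV. real (card {x\<in>S. g x = y}) * h y)"
proof -
  have "(\<Sum>x\<in>S. h (g x)) = (\<Sum>y\<in>UNIV. \<Sum>x\<in>{x\<in>S. g x = y}. h (g x))"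
    by (rule sum.group[symmetric]) (use assms in auto)
  also have "\<dots> = (\<Sum>y\<in>UNIV. real (card {x\<in>S. g x = y}) * h y)"
    by (intro sum.cong refl) auto
  finally show ?thesis .
qed

lemma card_fst_fiber: "card {x\<in>S. fst x = i} = card {j. (i, j) \<in> S}"
proof -
  have "{x\<in>S. fst x = i} = Pair i ` {j. (i, j) \<in> S}" by force
  then show ?thesis by (simp add: card_image inj_on_def)
qed

lemma card_snd_fiber: "card {x\<in>S. snd x = j} = card {i. (i, j) \<in> S}"
proof -
  have "{x\<in>S. snd x = j} = (\<lambda>i. (i, j)) ` {i. (i, j) \<in> S}" by force
  then show ?thesis by (simp add: card_image inj_on_def)
qed

text \<open>Subadditivity of Shannon entropy for the uniform distribution on S. Writing c and r for
  the fiber sizes, log c + log r \<le> log |S| + (c r / |S| - 1) / ln 2 pointwise on S by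
  ln x \<le> x - 1, and the sum of c r over S is at most the square of |S|.\<close>

lemma card_log_marginals_le:
  fixes S :: "('a::finite \<times> 'b::finite) set"
  shows "(\<Sum>j\<in>UNIV. real (card {i. (i, j) \<in> S}) * log 2 (real (card {i. (i, j) \<in> S})))
       + (\<Sum>i\<in>UNIV. real (card {j. (i, j) \<in> S}) * log 2 (real (card {j. (i, j) \<in> S})))
       \<le> real (card S) * log 2 (real (card S))"
proof (cases "S = {}")
  case False
  define col where "col j = real (card {i. (i, j) \<in> S})" for j
  define row where "row i = real (card {j. (i, j) \<in> S})" for i
  define c where "c = real (card S)"
  have "0 < c" using False by (simp add: c_def card_gt_0_iff)
  have fiber: "(\<Sum>j\<in>UNIV. col j * h (col j)) = (\<Sum>x\<in>S. h (col (snd x)))"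
    "(\<Sum>i\<in>UNIV. row i * h (row i)) = (\<Sum>x\<in>S. h (row (fst x)))" for h
    using sum_group_card[OF finite, of "\<lambda>j. h (col j)" snd S] sum_group_card[OF finite, of "\<lambda>i. h (row i)" fst S]
    by (simp_all add: card_snd_fiber card_fst_fiber col_def row_def)
  have total: "(\<Sum>j\<in>UNIV. col j) = c" "(\<Sum>i\<in>UNIV. row i) = c"
    using fiber[of "\<lambda>_. 1"] by (simp_all add: c_def)
  have pos: "0 < col (snd x)" "0 < row (fst x)" if "x \<in> S" for x
    using that by (auto simp: col_def row_def card_gt_0_iff intro!: exI[of _ "fst x"] exI[of _ "snd x"])
  have "log 2 (col (snd x)) + log 2 (row (fst x)) \<le> log 2 c + (col (snd x) * row (fst x) / c - 1) / ln 2"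
    if "x \<in> S" for x
  proof -
    have "log 2 (col (snd x)) + log 2 (row (fst x)) - log 2 c = ln (col (snd x) * row (fst x) / c) / ln 2"
      using pos[OF that] \<open>0 < c\<close> by (simp add: log_def ln_mult ln_div diff_divide_distrib add_divide_distrib)
    also have "\<dots> \<le> (col (snd x) * row (fst x) / c - 1) / ln 2"
      using pos[OF that] \<open>0 < c\<close> by (intro divide_right_mono ln_le_minus_one) auto
    finally show ?thesis by simp
  qed
  then have "(\<Sum>j\<in>UNIV. col j * log 2 (col j)) + (\<Sum>i\<in>UNIV. row i * log 2 (row i))
      \<le> (\<Sum>x\<in>S. log 2 c + (col (snd x) * row (fst x) / c - 1) / ln 2)"
    unfolding fiber sum.distrib[symmetric] by (rule sum_mono)
  also have "\<dots> = c * log 2 c + ((\<Sum>x\<in>S. col (snd x) * row (fst x)) / c - c) / ln 2"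
    by (simp add: sum.distrib sum_subtractf c_def diff_divide_distrib flip: sum_divide_distrib)
  also have "\<dots> \<le> c * log 2 c"
  proof -
    have "(\<Sum>x\<in>S. col (snd x) * row (fst x)) \<le> (\<Sum>x\<in>UNIV. col (snd x) * row (fst x))"
      by (rule sum_mono2) (auto simp: col_def row_def)
    also have "\<dots> = (\<Sum>i\<in>UNIV. row i) * (\<Sum>j\<in>UNIV. col j)"
      by (simp add: sum.cartesian_product' sum_product mult.commute flip: UNIV_Times_UNIV)
    also have "\<dots> = c * c"
      by (simp add: total)
    finally show ?thesis using \<open>0 < c\<close> by (simp add: field_simps)
  qed
  finally show ?thesis by (simp add: col_def row_def c_def)
qed simp

lemma CfU_ptrace_superadditive:
  fixes R :: "complex^('a::finite \<times> 'b::finite)^('a \<times> 'b)"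
  shows "CfU (ptrace_B R) + CfU (ptrace_A R) \<le> CfU R"
proof (rule CfU_greatest)
  fix I :: "nat set" and p S z
  assume d: "unif_decomp R I p S z"
  have p: "\<And>x. x \<in> I \<Longrightarrow> 0 \<le> p x"
    using d by (simp add: unif_decomp_def)
  define XB where "XB = (\<Sum>x\<in>I. p x / real (card (S x)) *
      (\<Sum>j\<in>UNIV. real (card {i. (i, j) \<in> S x}) * log 2 (real (card {i. (i, j) \<in> S x}))))"
  define XA where "XA = (\<Sum>x\<in>I. p x / real (card (S x)) *
      (\<Sum>i\<in>UNIV. real (card {j. (i, j) \<in> S x}) * log 2 (real (card {j. (i, j) \<in> S x}))))"
  have "CfU (ptrace_B R) \<le> ennreal XB"
    unfolding ptrace_B_eq_sum_compress XB_def
    using CfU_sum_compress_le[OF d, of "\<lambda>j i. (i, j)"] by (force simp: vimage_def inj_on_def)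
  moreover have "CfU (ptrace_A R) \<le> ennreal XA"
    unfolding ptrace_A_eq_sum_compress XA_def
    using CfU_sum_compress_le[OF d, of Pair] by (force simp: vimage_def inj_on_def)
  moreover have "0 \<le> XB" "0 \<le> XA"
    unfolding XB_def XA_def
    by (intro sum_nonneg mult_nonneg_nonneg divide_nonneg_nonneg; simp add: p log2_of_nat_nonneg)+
  moreover have "XB + XA \<le> decomp_cost I p S"
  proof -
    have "XB + XA \<le> (\<Sum>x\<in>I. p x / real (card (S x)) * (real (card (S x)) * log 2 (real (card (S x)))))"
      unfolding XB_def XA_def sum.distrib[symmetric] distrib_left[symmetric]
      using p by (intro sum_mono mult_left_mono card_log_marginals_le) auto
    also have "\<dots> = decomp_cost I p S"
      unfolding decomp_cost_def by (intro sum.cong refl) (simp add: log_def)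
    finally show ?thesis .
  qed
  ultimately show "CfU (ptrace_B R) + CfU (ptrace_A R) \<le> ennreal (decomp_cost I p S)"
    by (metis add_mono ennreal_leI ennreal_plus order.trans)
qed

section \<open>Tensor products\<close>

definition tensor_vec :: "complex^'a::finite \<Rightarrow> complex^'b::finite \<Rightarrow> complex^('a \<times> 'b)" where
  "tensor_vec u v = (\<chi> x. u $ fst x * v $ snd x)"

lemma tensor_outer: "tensor (outer u) (outer v) = outer (tensor_vec u v)"
  by (simp add: vec_eq_iff tensor_def outer_def tensor_vec_def mult_ac)

lemma tensor_sum_scaleR:
  "tensor (\<Sum>a\<in>I. c a *\<^sub>R M a) (\<Sum>b\<in>J. d b *\<^sub>R N b) =
     (\<Sum>a\<in>I. \<Sum>b\<in>J. (c a * d b) *\<^sub>R tensor (M a) (N b))"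
  by (simp add: vec_eq_iff tensor_def sum_product mult_ac)

lemma tensor_vec_unif_vec:
  "tensor_vec (unif_vec J1 z1) (unif_vec J2 z2) = unif_vec (J1 \<times> J2) (tensor_vec z1 z2)"
  by (auto simp: vec_eq_iff tensor_vec_def unif_vec_def card_cartesian_product real_sqrt_mult)

lemma unimodular_tensor_vec: "unimodular u \<Longrightarrow> unimodular v \<Longrightarrow> unimodular (tensor_vec u v)"
  by (simp add: unimodular_def tensor_vec_def norm_mult)

lemma unif_decomp_tensor:
  assumes d1: "unif_decomp \<rho> I1 p1 J1 z1" and d2: "unif_decomp \<sigma> I2 p2 J2 z2"
  shows "unif_decomp (tensor \<rho> \<sigma>) (I1 \<times> I2) (\<lambda>(a, b). p1 a * p2 b) (\<lambda>(a, b). J1 a \<times> J2 b)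
           (\<lambda>(a, b). tensor_vec (z1 a) (z2 b))"
    and "decomp_cost (I1 \<times> I2) (\<lambda>(a, b). p1 a * p2 b) (\<lambda>(a, b). J1 a \<times> J2 b) =
           decomp_cost I1 p1 J1 + decomp_cost I2 p2 J2"
proof -
  have f: "finite I1" "finite I2" and s: "sum p1 I1 = 1" "sum p2 I2 = 1"
    and p1: "\<And>a. a \<in> I1 \<Longrightarrow> 0 \<le> p1 a \<and> (p1 a \<noteq> 0 \<longrightarrow> J1 a \<noteq> {}) \<and> unimodular (z1 a)"
    and p2: "\<And>b. b \<in> I2 \<Longrightarrow> 0 \<le> p2 b \<and> (p2 b \<noteq> 0 \<longrightarrow> J2 b \<noteq> {}) \<and> unimodular (z2 b)"
    and \<rho>: "\<rho> = (\<Sum>a\<in>I1. p1 a *\<^sub>R outer (unif_vec (J1 a) (z1 a)))"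
    and \<sigma>: "\<sigma> = (\<Sum>b\<in>I2. p2 b *\<^sub>R outer (unif_vec (J2 b) (z2 b)))"
    using d1 d2 by (auto simp: unif_decomp_def)
  show "unif_decomp (tensor \<rho> \<sigma>) (I1 \<times> I2) (\<lambda>(a, b). p1 a * p2 b) (\<lambda>(a, b). J1 a \<times> J2 b)
           (\<lambda>(a, b). tensor_vec (z1 a) (z2 b))"
    using f s p1 p2 unfolding unif_decomp_def \<rho> \<sigma> tensor_sum_scaleR
    by (auto simp: tensor_outer tensor_vec_unif_vec unimodular_tensor_vec sum.cartesian_product'
        simp flip: sum_distrib_left sum_distrib_right)
  have "p1 a * p2 b * log 2 (real (card (J1 a \<times> J2 b))) =
      p2 b * (p1 a * log 2 (real (card (J1 a)))) + p1 a * (p2 b * log 2 (real (card (J2 b))))"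
    if "a \<in> I1" "b \<in> I2" for a b
    using p1[OF that(1)] p2[OF that(2)]
    by (cases "p1 a = 0 \<or> p2 b = 0") (auto simp: card_cartesian_product log_mult card_gt_0_iff algebra_simps)
  then show "decomp_cost (I1 \<times> I2) (\<lambda>(a, b). p1 a * p2 b) (\<lambda>(a, b). J1 a \<times> J2 b) =
           decomp_cost I1 p1 J1 + decomp_cost I2 p2 J2"
    using s by (simp add: decomp_cost_def sum.cartesian_product' sum.distrib sum.swap[of _ I1 I2]
        flip: sum_distrib_left sum_distrib_right)
qed

lemma CfU_tensor_le: "CfU (tensor \<rho> \<sigma>) \<le> CfU \<rho> + CfU \<sigma>"
proof (rule ennreal_le_epsilon)
  fix e :: real
  assume fin: "CfU \<rho> + CfU \<sigma> < top" and e: "0 < e"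
  then have "CfU \<rho> < top" "CfU \<sigma> < top" "0 < e / 2"
    by (auto simp: top.not_eq_extremum)
  then obtain I1 :: "nat set" and p1 J1 z1 and I2 :: "nat set" and p2 J2 z2
    where d1: "unif_decomp \<rho> I1 p1 J1 z1" "ennreal (decomp_cost I1 p1 J1) < CfU \<rho> + ennreal (e / 2)"
      and d2: "unif_decomp \<sigma> I2 p2 J2 z2" "ennreal (decomp_cost I2 p2 J2) < CfU \<sigma> + ennreal (e / 2)"
    by (metis CfU_approx)
  have "CfU (tensor \<rho> \<sigma>) \<le> ennreal (decomp_cost I1 p1 J1) + ennreal (decomp_cost I2 p2 J2)"
    using CfU_le_decomp_cost[OF unif_decomp_tensor(1)[OF d1(1) d2(1)]] unif_decomp_tensor(2)[OF d1(1) d2(1)]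
      decomp_cost_nonneg[OF d1(1)] decomp_cost_nonneg[OF d2(1)]
    by (simp add: ennreal_plus)
  also have "\<dots> \<le> (CfU \<rho> + ennreal (e / 2)) + (CfU \<sigma> + ennreal (e / 2))"
    using d1(2) d2(2) by (intro add_mono) auto
  also have "\<dots> = CfU \<rho> + CfU \<sigma> + ennreal e"
    using e by (simp add: ac_simps flip: ennreal_plus)
  finally show "CfU (tensor \<rho> \<sigma>) \<le> CfU \<rho> + CfU \<sigma> + ennreal e" .
qed

lemma ptrace_B_tensor: "trace \<sigma> = 1 \<Longrightarrow> ptrace_B (tensor \<rho> \<sigma>) = \<rho>"
  by (simp add: vec_eq_iff ptrace_B_def tensor_def trace_def flip: sum_distrib_left)

lemma ptrace_A_tensor: "trace \<rho> = 1 \<Longrightarrow> ptrace_A (tensor \<rho> \<sigma>) = \<sigma>"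
  by (simp add: vec_eq_iff ptrace_A_def tensor_def trace_def flip: sum_distrib_right)

lemma CfU_tensor:
  assumes "is_state \<rho>" "is_state \<sigma>"
  shows "CfU (tensor \<rho> \<sigma>) = CfU \<rho> + CfU \<sigma>"
proof (rule antisym)
  show "CfU \<rho> + CfU \<sigma> \<le> CfU (tensor \<rho> \<sigma>)"
    using CfU_ptrace_superadditive[of "tensor \<rho> \<sigma>"] assms
    by (simp add: is_state_def ptrace_B_tensor ptrace_A_tensor)
qed (rule CfU_tensor_le)

section \<open>Lower semicontinuity\<close>

definition unif_hull :: "'n set \<Rightarrow> (complex^'n^'n) set" where
  "unif_hull J = convex hull ((\<lambda>z. outer (unif_vec J z)) ` {z. unimodular z})"

lemma compact_unimodular: "compact {z :: complex^'n. unimodular z}"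
proof -
  have "closed {z :: complex^'n. unimodular z}"
    unfolding unimodular_def by (simp add: Collect_all_eq closed_INT closed_Collect_eq continuous_intros)
  moreover have "norm z \<le> real CARD('n)" if "unimodular z" for z :: "complex^'n"
  proof -
    have "norm z \<le> (\<Sum>i\<in>UNIV. norm (z $ i))"
      unfolding norm_vec_def by (rule L2_set_le_sum) auto
    then show ?thesis using that by (simp add: unimodular_def)
  qed
  then have "bounded {z :: complex^'n. unimodular z}"
    unfolding bounded_iff by blast
  ultimately show ?thesis by (simp add: compact_eq_bounded_closed)
qed

lemma compact_unif_hull: "compact (unif_hull J)"
proof -
  have nth: "unif_vec J z $ j = z $ j * (if j \<in> J then inverse (of_real (sqrt (real (card J)))) else 0)"
    for z j by (simp add: unif_vec_def divide_inverse)
  have "continuous_on UNIV (\<lambda>z. outer (unif_vec J z))"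
    unfolding outer_def nth by (intro continuous_on_vec_lambda continuous_intros)
  then show ?thesis
    unfolding unif_hull_def
    by (intro compact_convex_hull compact_continuous_image compact_unimodular) (auto intro: continuous_on_subset)
qed

lemma convex_unif_hull: "convex (unif_hull J)"
  by (simp add: unif_hull_def convex_convex_hull)

lemma outer_unif_vec_in_unif_hull: "unimodular z \<Longrightarrow> outer (unif_vec J z) \<in> unif_hull J"
  unfolding unif_hull_def by (rule hull_inc) blast

lemma unif_hull_imp_unif_decomp:
  fixes N :: "complex^'n^'n"
  assumes "J \<noteq> {}" "N \<in> unif_hull J"
  obtains S :: "(complex^'n^'n) set" and u z where "unif_decomp N S u (\<lambda>_. J) z"
proof -
  obtain S u where S: "finite S" "S \<subseteq> (\<lambda>z. outer (unif_vec J z)) ` {z. unimodular z}"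
    "\<forall>x\<in>S. 0 \<le> u x" "sum u S = 1" "(\<Sum>v\<in>S. u v *\<^sub>R v) = N"
    using assms(2) unfolding unif_hull_def convex_hull_explicit by blast
  then have "\<forall>v\<in>S. \<exists>z. unimodular z \<and> v = outer (unif_vec J z)"
    by blast
  then obtain z where "\<And>v. v \<in> S \<Longrightarrow> unimodular (z v) \<and> v = outer (unif_vec J (z v))"
    by metis
  with S assms(1) have "unif_decomp N S u (\<lambda>_. J) z"
    unfolding unif_decomp_def by (auto intro: sum.cong)
  then show ?thesis by (rule that)
qed

lemma sum_outer_unif_vec_in_unif_hull:
  assumes "finite F" "sum q F = 1" "\<forall>x\<in>F. 0 \<le> q x \<and> unimodular (z x)"
  shows "(\<Sum>x\<in>F. q x *\<^sub>R outer (unif_vec J (z x))) \<in> unif_hull J"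
  using assms by (intro convex_sum) (auto simp: convex_unif_hull outer_unif_vec_in_unif_hull)

text \<open>A decomposition with its terms grouped by their support J; N J is the normalised sum of
  the terms supported on J (arbitrary when w J = 0).\<close>

definition grouped_decomp ::
    "complex^'n^'n \<Rightarrow> ('n set \<Rightarrow> real) \<Rightarrow> ('n set \<Rightarrow> complex^'n^'n) \<Rightarrow> bool" where
  "grouped_decomp \<rho> w N \<longleftrightarrow> (\<forall>J. 0 \<le> w J \<and> w J \<le> 1 \<and> N J \<in> unif_hull J) \<and> w {} = 0 \<and>
     sum w UNIV = 1 \<and> \<rho> = (\<Sum>J\<in>UNIV. w J *\<^sub>R N J)"

definition grouped_cost :: "('n set \<Rightarrow> real) \<Rightarrow> real" where
  "grouped_cost w = (\<Sum>J\<in>UNIV. w J * log 2 (real (card J)))"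

lemma CfU_le_grouped_cost:
  fixes N :: "'n set \<Rightarrow> complex^'n^'n"
  assumes "grouped_decomp \<rho> w N"
  shows "CfU \<rho> \<le> ennreal (grouped_cost w)"
proof -
  have wN: "\<And>J. 0 \<le> w J \<and> N J \<in> unif_hull J" and w: "w {} = 0" "sum w UNIV = 1"
    and \<rho>: "\<rho> = (\<Sum>J\<in>UNIV. w J *\<^sub>R N J)"
    using assms by (auto simp: grouped_decomp_def)
  define F :: "'n set set" where "F = UNIV - {{}}"
  have drop: "sum f UNIV = sum f F" if "f {} = 0" for f :: "'n set \<Rightarrow> 'z::comm_monoid_add"
    using that by (intro sum.mono_neutral_right) (auto simp: F_def)
  have "\<forall>J\<in>F. \<exists>(S :: (complex^'n^'n) set) u z. unif_decomp (N J) S u (\<lambda>_. J) z"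
    using unif_hull_imp_unif_decomp wN by (metis DiffD2 F_def singletonI)
  then obtain S :: "'n set \<Rightarrow> (complex^'n^'n) set" and u z
    where d: "\<And>J. J \<in> F \<Longrightarrow> unif_decomp (N J) (S J) (u J) (\<lambda>_. J) (z J)"
    unfolding bchoice_iff by blast
  have cost: "decomp_cost (S J) (u J) (\<lambda>_. J) = log 2 (real (card J))" if "J \<in> F" for J
    using d[OF that] by (simp add: decomp_cost_def unif_decomp_def flip: sum_distrib_right)
  have mix: "finite F" "\<forall>J\<in>F. 0 \<le> w J" "sum w F = 1"
    using wN w drop[of w] by auto
  have "CfU (\<Sum>J\<in>F. w J *\<^sub>R N J) \<le> ennreal (\<Sum>J\<in>F. w J * decomp_cost (S J) (u J) (\<lambda>_. J))"
    using CfU_le_decomp_cost[OF unif_decomp_mixture(1)[OF mix d]] unif_decomp_mixture(2)[OF mix d] by simp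
  also have "\<dots> = ennreal (\<Sum>J\<in>F. w J * log 2 (real (card J)))"
    by (simp add: cost)
  finally show ?thesis
    using w(1) drop[of "\<lambda>J. w J *\<^sub>R N J"] drop[of "\<lambda>J. w J * log 2 (real (card J))"]
    by (simp add: \<rho> grouped_cost_def)
qed

lemma unif_decomp_imp_grouped:
  fixes \<rho> :: "complex^'n^'n"
  assumes d: "unif_decomp \<rho> I p J z"
  obtains w N where "grouped_decomp \<rho> w N" "grouped_cost w = decomp_cost I p J"
proof -
  have fin: "finite I" and p1: "sum p I = 1" and \<rho>: "\<rho> = (\<Sum>x\<in>I. p x *\<^sub>R outer (unif_vec (J x) (z x)))"
    and px: "\<And>x. x \<in> I \<Longrightarrow> 0 \<le> p x \<and> (p x \<noteq> 0 \<longrightarrow> J x \<noteq> {}) \<and> unimodular (z x)"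
    using d by (auto simp: unif_decomp_def)
  define fiber where "fiber K = {x\<in>I. J x = K}" for K
  have fin_fiber: "finite (fiber K)" for K
    using fin by (simp add: fiber_def)
  have fiber: "x \<in> fiber K \<longleftrightarrow> x \<in> I \<and> J x = K" for x K
    by (simp add: fiber_def)
  have group: "sum f I = (\<Sum>K\<in>UNIV. sum f (fiber K))" for f :: "_ \<Rightarrow> 'z::comm_monoid_add"
    unfolding fiber_def by (rule sum.group[OF fin finite, symmetric]) simp
  define w where "w K = sum p (fiber K)" for K
  define N where "N K = (if w K = 0 then outer (unif_vec K 1)
    else (\<Sum>x\<in>fiber K. (p x / w K) *\<^sub>R outer (unif_vec K (z x))))" for K
  have w: "0 \<le> w K" "w K \<le> 1" for K
    using px p1 by (auto simp: w_def fiber intro: sum_nonneg order.trans[OF sum_mono2[OF fin]])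
  have w0: "p x = 0" if "w K = 0" "x \<in> fiber K" for K x
  proof -
    have "\<forall>y\<in>fiber K. 0 \<le> p y" using px by (auto simp: fiber)
    then show ?thesis using that sum_nonneg_eq_0_iff[OF fin_fiber] by (auto simp: w_def)
  qed
  have fiber_sum: "(\<Sum>x\<in>fiber K. p x *\<^sub>R outer (unif_vec (J x) (z x))) = w K *\<^sub>R N K" for K
  proof (cases "w K = 0")
    case False
    then show ?thesis
      by (auto simp: N_def scaleR_sum_right fiber intro!: sum.cong)
  qed (simp add: w0)
  have "N K \<in> unif_hull K" for K
    using px w[of K] fin_fiber
    by (auto simp: N_def outer_unif_vec_in_unif_hull unimodular_def w_def fiber
        intro!: sum_outer_unif_vec_in_unif_hull simp flip: sum_divide_distrib)
  moreover have "w {} = 0"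
    by (auto simp: w_def fiber intro!: sum.neutral dest: px)
  ultimately have "grouped_decomp \<rho> w N"
    using w p1 by (simp add: grouped_decomp_def w_def group \<rho> fiber_sum)
  moreover have "grouped_cost w = decomp_cost I p J"
    by (simp add: grouped_cost_def decomp_cost_def group w_def sum_distrib_right fiber_def)
  ultimately show ?thesis
    using that by blast
qed

lemma CfU_less_imp_grouped:
  fixes \<rho> :: "complex^'n^'n"
  assumes "CfU \<rho> < ennreal c"
  obtains w N where "grouped_decomp \<rho> w N" "grouped_cost w < c"
proof -
  obtain I :: "nat set" and p J z where d: "unif_decomp \<rho> I p J z" "ennreal (decomp_cost I p J) < ennreal c"
    using CfU_less_decomp_cost[OF assms] by blast
  then have "decomp_cost I p J < c"
    using decomp_cost_nonneg[OF d(1)] by (simp add: ennreal_less_iff)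
  then show ?thesis
    using unif_decomp_imp_grouped[OF d(1)] that by metis
qed

lemma compact_family_convergent_subseq:
  fixes f :: "nat \<Rightarrow> 'k \<Rightarrow> 'a::metric_space"
  assumes "finite F" "\<And>J. J \<in> F \<Longrightarrow> compact (C J)" "\<And>m J. J \<in> F \<Longrightarrow> f m J \<in> C J"
  shows "\<exists>r l. strict_mono r \<and> (\<forall>J\<in>F. l J \<in> C J \<and> (\<lambda>m. f (r m) J) \<longlonglongrightarrow> l J)"
  using assms
proof (induction F rule: finite_induct)
  case empty
  show ?case by (intro exI[of _ id]) (auto simp: strict_mono_def)
next
  case (insert J F)
  then obtain r l where r: "strict_mono r" and l: "\<forall>J\<in>F. l J \<in> C J \<and> (\<lambda>m. f (r m) J) \<longlonglongrightarrow> l J"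
    by blast
  obtain l0 s where l0: "l0 \<in> C J" and s: "strict_mono s" and lim: "((\<lambda>m. f (r m) J) \<circ> s) \<longlonglongrightarrow> l0"
    using compact_imp_seq_compact[OF insert.prems(1)] insert.prems(2) unfolding seq_compact_def
    by (metis insertI1)
  have "(\<lambda>m. f (r (s m)) J') \<longlonglongrightarrow> l J'" if "J' \<in> F" for J'
    using LIMSEQ_subseq_LIMSEQ[OF l[rule_format, OF that, THEN conjunct2] s] by (simp add: o_def)
  then have "\<forall>J'\<in>insert J F. (l(J := l0)) J' \<in> C J' \<and> (\<lambda>m. f ((r \<circ> s) m) J') \<longlonglongrightarrow> (l(J := l0)) J'"
    using l l0 lim by (auto simp: o_def)
  moreover have "strict_mono (r \<circ> s)"
    using r s by (rule strict_mono_o)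
  ultimately show ?case by blast
qed

lemma CfU_le_of_limit:
  fixes X :: "nat \<Rightarrow> complex^'n^'n"
  assumes lim: "X \<longlonglongrightarrow> \<rho>" and bound: "\<And>m. CfU (X m) < ennreal c"
  shows "CfU \<rho> \<le> ennreal c"
proof -
  have "\<forall>m. \<exists>(w :: 'n set \<Rightarrow> real) N. grouped_decomp (X m) w N \<and> grouped_cost w < c"
    using CfU_less_imp_grouped[OF bound] by metis
  then obtain w :: "nat \<Rightarrow> 'n set \<Rightarrow> real" and N
    where wN: "\<And>m. grouped_decomp (X m) (w m) (N m)" and cost: "\<And>m. grouped_cost (w m) < c"
    unfolding choice_iff by blast
  have "\<exists>r l. strict_mono r \<and>
      (\<forall>K\<in>UNIV. l K \<in> {0..1} \<times> unif_hull K \<and> (\<lambda>m. (w (r m) K, N (r m) K)) \<longlonglongrightarrow> l K)"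
    using wN by (intro compact_family_convergent_subseq) (auto simp: compact_Times compact_unif_hull grouped_decomp_def)
  then obtain r l where r: "strict_mono r"
    and l: "\<And>K. l K \<in> {0..1} \<times> unif_hull K \<and> (\<lambda>m. (w (r m) K, N (r m) K)) \<longlonglongrightarrow> l K"
    by blast
  define w' where "w' K = fst (l K)" for K
  define N' where "N' K = snd (l K)" for K
  have lim_w: "(\<lambda>m. w (r m) K) \<longlonglongrightarrow> w' K" and lim_N: "(\<lambda>m. N (r m) K) \<longlonglongrightarrow> N' K" for K
    using tendsto_fst[OF l[THEN conjunct2]] tendsto_snd[OF l[THEN conjunct2]] by (auto simp: w'_def N'_def)
  have "w' {} = 0"
    using lim_w[of "{}"] wN by (simp add: grouped_decomp_def LIMSEQ_const_iff)
  moreover have "sum w' UNIV = 1"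
    using tendsto_sum[of UNIV "\<lambda>K m. w (r m) K", OF lim_w] wN by (simp add: grouped_decomp_def LIMSEQ_const_iff)
  moreover have "\<rho> = (\<Sum>K\<in>UNIV. w' K *\<^sub>R N' K)"
  proof (rule LIMSEQ_unique)
    show "(\<lambda>m. X (r m)) \<longlonglongrightarrow> \<rho>"
      using LIMSEQ_subseq_LIMSEQ[OF lim r] by (simp add: o_def)
    have "X (r m) = (\<Sum>K\<in>UNIV. w (r m) K *\<^sub>R N (r m) K)" for m
      using wN by (simp add: grouped_decomp_def)
    then show "(\<lambda>m. X (r m)) \<longlonglongrightarrow> (\<Sum>K\<in>UNIV. w' K *\<^sub>R N' K)"
      by (simp only:) (intro tendsto_sum tendsto_scaleR lim_w lim_N)
  qed
  ultimately have "grouped_decomp \<rho> w' N'"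
    using l by (auto simp: grouped_decomp_def w'_def N'_def mem_Times_iff)
  moreover have "grouped_cost w' \<le> c"
  proof (rule LIMSEQ_le_const2)
    show "(\<lambda>m. grouped_cost (w (r m))) \<longlonglongrightarrow> grouped_cost w'"
      unfolding grouped_cost_def by (intro tendsto_sum tendsto_mult_right lim_w)
    show "\<exists>M. \<forall>m\<ge>M. grouped_cost (w (r m)) \<le> c"
      using cost less_imp_le by blast
  qed
  ultimately show ?thesis
    using CfU_le_grouped_cost by (metis ennreal_leI order.trans)
qed

lemma CfU_lsc:
  fixes X :: "nat \<Rightarrow> complex^'n^'n"
  assumes lim: "X \<longlonglongrightarrow> \<rho>"
  shows "CfU \<rho> \<le> liminf (\<lambda>m. CfU (X m))"
proof -
  obtain r where r: "strict_mono r" "((\<lambda>m. CfU (X m)) \<circ> r) \<longlonglongrightarrow> liminf (\<lambda>m. CfU (X m))"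
    using liminf_subseq_lim by blast
  show ?thesis
  proof (rule dense_ge)
    fix y assume y: "liminf (\<lambda>m. CfU (X m)) < y"
    then obtain N where N: "\<And>m. N \<le> m \<Longrightarrow> CfU (X (r m)) < y"
      using order_tendstoD(2)[OF r(2)] by (auto simp: eventually_sequentially)
    have "(\<lambda>m. X (r (m + N))) \<longlonglongrightarrow> \<rho>"
      using LIMSEQ_ignore_initial_segment[OF LIMSEQ_subseq_LIMSEQ[OF lim r(1)], of N] by (simp add: o_def)
    then show "CfU \<rho> \<le> y"
      using N by (cases y) (auto intro!: CfU_le_of_limit)
  qed
qed

theorem proposition3:
  shows
  \<comment> \<open>(a1) convexity\<close>
  "(\<forall>(S::nat set) (p::nat \<Rightarrow> real) (\<rho>s::nat \<Rightarrow> complex^'n^'n).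
      finite S \<and> (\<forall>i\<in>S. 0 \<le> p i \<and> is_state (\<rho>s i)) \<and> sum p S = 1 \<longrightarrow>
      CfU (\<Sum>i\<in>S. p i *\<^sub>R \<rho>s i) \<le> (\<Sum>i\<in>S. ennreal (p i) * CfU (\<rho>s i)))
   \<and>
   \<comment> \<open>(a2) strong monotonicity under PIO\<close>
   (\<forall>(\<rho>::complex^'n^'n) (A::nat set) (p::nat \<Rightarrow> real) (B::nat \<Rightarrow> nat set)
       (I::nat \<Rightarrow> nat \<Rightarrow> 'n set) (U::nat \<Rightarrow> nat \<Rightarrow> complex^'n^'n).
      is_state \<rho> \<and> finite A \<and> (\<forall>a\<in>A. 0 \<le> p a) \<and> sum p A = 1 \<and>
      (\<forall>a\<in>A. finite (B a) \<and> (\<forall>i. \<exists>!b. b \<in> B a \<and> i \<in> I a b)) \<and>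
      (\<forall>a\<in>A. \<forall>b\<in>B a. incoh_unitary (U a b)) \<longrightarrow>
      (let q = (\<lambda>a b. Re (trace (\<rho> ** incoh_proj (I a b))));
           K = (\<lambda>a b. U a b ** incoh_proj (I a b) ** \<rho> ** incoh_proj (I a b) ** adj (U a b));
           mid = (\<Sum>a\<in>A. \<Sum>b\<in>{b\<in>B a. q a b \<noteq> 0}.
                    ennreal (p a * q a b) * CfU ((1 / q a b) *\<^sub>R K a b))
       in CfU (\<Sum>a\<in>A. \<Sum>b\<in>B a. p a *\<^sub>R K a b) \<le> mid \<and> mid \<le> CfU \<rho>))
   \<and>
   \<comment> \<open>(b) superadditivity\<close>
   (\<forall>\<rho>AB::complex^('a\<times>'b)^('a\<times>'b). is_state \<rho>AB \<longrightarrow>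
      CfU (ptrace_B \<rho>AB) + CfU (ptrace_A \<rho>AB) \<le> CfU \<rho>AB)
   \<and>
   \<comment> \<open>(c) additivity on tensor products\<close>
   (\<forall>(\<rho>A::complex^'a^'a) (\<sigma>B::complex^'b^'b). is_state \<rho>A \<and> is_state \<sigma>B \<longrightarrow>
      CfU (tensor \<rho>A \<sigma>B) = CfU \<rho>A + CfU \<sigma>B)
   \<and>
   \<comment> \<open>(d) lower semicontinuity (on the set of states)\<close>
   (\<forall>(\<rho>::complex^'n^'n) (X::nat \<Rightarrow> complex^'n^'n).
      is_state \<rho> \<and> (\<forall>m. is_state (X m)) \<and> X \<longlonglongrightarrow> \<rho> \<longrightarrow>
      CfU \<rho> \<le> liminf (\<lambda>m. CfU (X m)))"
  apply (intro conjI allI impI)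
  subgoal by (rule CfU_convex) auto
  subgoal using CfU_PIO_strong_monotone by blast
  subgoal by (rule CfU_ptrace_superadditive)
  subgoal using CfU_tensor by blast
  subgoal using CfU_lsc by blast
  done

end
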